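(* Let $p>3$ be a prime. Then $$\sum_{k=1}^{(p-3)/2}\frac{(-1)^k\binom{(p-1)/2}{k}\,(2H_{2k}-H_k)}{2k+1}\equiv -2(-1)^{(p-1)/2}q_p(2)^2\pmod p.$$
   Context: $H_n=\sum_{0<j\le n}1/j$ is the $n$-th harmonic number ($H_0=0$), and $q_p(2)=(2^{p-1}-1)/p$ is the Fermat quotient. Congruences between rationals modulo $p$ mean the difference is $p$ times a rational with denominator prime to $p$. *)

theory Defs
  imports Complex_Main "HOL-Number_Theory.Number_Theory"
begin

definition harm :: "nat \<Rightarrow> rat" where
  "harm n = (\<Sum>j\<in>{1..n}. 1 / of_nat j)"

definition fermat_quotient2 :: "nat \<Rightarrow> rat" where
  "fermat_quotient2 p = (2 ^ (p - 1) - 1) / of_nat p"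

definition rat_cong :: "rat \<Rightarrow> rat \<Rightarrow> nat \<Rightarrow> bool" where
  "rat_cong x y p \<longleftrightarrow>
     (\<exists>a b :: int. b \<noteq> 0 \<and> \<not> int p dvd b \<and> x - y = of_nat p * (of_int a / of_int b))"

end

theory Submission
  imports Defs
begin

text \<open>
  Differentiating the Chu--Vandermonde identity
  \<open>\<Sum>\<^sub>k (-1)\<^sup>k C(m,k) (a)\<^sub>k / (b)\<^sub>k = (b - a)\<^sub>m / (b)\<^sub>m\<close> with respect to \<open>a\<close>
  and evaluating at \<open>a = 1/2\<close>, \<open>b = 3/2\<close> sums the series over all \<open>0 \<le> k \<le> m\<close>:
  it equals \<open>-4\<^sup>m H\<^sub>m / ((2m+1) C(2m,m))\<close>.  For \<open>p = 2m + 1\<close> the extra term \<open>k = m\<close> is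
  \<open>(-1)\<^sup>m (2H\<^sub>p\<^sub>-\<^sub>1 - H\<^sub>m) / p\<close>, and \<open>H\<^sub>p\<^sub>-\<^sub>1 \<equiv> 0 (mod p\<^sup>2)\<close> by Wolstenholme.
  The products \<open>(-1)\<^sup>m C(2m,m) = \<Prod>\<^sub>i\<^sub>\<le>\<^sub>m (1 - p/i)\<close> and
  \<open>(-1)\<^sup>m C(2m,m)/4\<^sup>m = \<Prod>\<^sub>i\<^sub>\<le>\<^sub>m (1 - p/(2i))\<close> are \<open>1 - pH\<^sub>m\<close> and \<open>1 - pH\<^sub>m/2\<close> modulo \<open>p\<^sup>2\<close>;
  comparing them gives \<open>q\<^sub>p(2) \<equiv> -H\<^sub>m/2\<close>, and the truncated sum is
  \<open>\<equiv> -(-1)\<^sup>m H\<^sub>m\<^sup>2/2 \<equiv> -2(-1)\<^sup>m q\<^sub>p(2)\<^sup>2 (mod p)\<close>.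
\<close>

section \<open>A binomial sum of harmonic numbers\<close>

lemma alternating_binomial_sum_Suc:
  fixes f :: "nat \<Rightarrow> 'a::comm_ring_1"
  shows "(\<Sum>k\<le>Suc m. (-1)^k * of_nat (Suc m choose k) * f k)
       = (\<Sum>k\<le>m. (-1)^k * of_nat (m choose k) * (f k - f (Suc k)))"
proof -
  have "(\<Sum>k\<le>Suc m. (-1)^k * of_nat (Suc m choose k) * f k)
      = f 0 + (\<Sum>k\<le>m. (-1)^Suc k * of_nat (Suc m choose Suc k) * f (Suc k))"
    by (simp add: sum.atMost_Suc_shift del: sum.atMost_Suc)
  also have "\<dots> = (\<Sum>k\<le>m. (-1)^Suc k * of_nat (m choose k) * f (Suc k))
      + (f 0 + (\<Sum>k\<le>m. (-1)^Suc k * of_nat (m choose Suc k) * f (Suc k)))"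
    by (simp only: binomial_Suc_Suc of_nat_add distrib_left distrib_right sum.distrib)
      (simp add: ac_simps)
  also have "f 0 + (\<Sum>k\<le>m. (-1)^Suc k * of_nat (m choose Suc k) * f (Suc k))
      = (\<Sum>k\<le>Suc m. (-1)^k * of_nat (m choose k) * f k)"
    by (simp add: sum.atMost_Suc_shift del: sum.atMost_Suc)
  also have "\<dots> = (\<Sum>k\<le>m. (-1)^k * of_nat (m choose k) * f k)"
    by (simp add: binomial_eq_0)
  finally show ?thesis
    by (simp add: sum_subtractf right_diff_distrib sum_negf)
qed

text \<open>The derivative of \<open>pochhammer a k\<close> with respect to \<open>a\<close>, by the product rule applied to
  \<open>(a)\<^sub>k\<^sub>+\<^sub>1 = (a)\<^sub>k (a + k)\<close>.\<close>
primrec pochhammer_deriv :: "'a::comm_ring_1 \<Rightarrow> nat \<Rightarrow> 'a" where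
  "pochhammer_deriv a 0 = 0"
| "pochhammer_deriv a (Suc k) = pochhammer_deriv a k * (a + of_nat k) + pochhammer a k"

lemma pochhammer_deriv_Suc':
  "pochhammer_deriv a (Suc k) = pochhammer (a + 1) k + a * pochhammer_deriv (a + 1) k"
proof (induction k)
  case 0
  then show ?case by simp
next
  case (Suc k)
  have "pochhammer_deriv a (Suc (Suc k))
      = (pochhammer (a + 1) k + a * pochhammer_deriv (a + 1) k) * (a + 1 + of_nat k)
        + a * pochhammer (a + 1) k"
    using Suc.IH by (simp add: pochhammer_rec algebra_simps)
  also have "\<dots> = pochhammer (a + 1) (Suc k) + a * pochhammer_deriv (a + 1) (Suc k)"
    by (simp add: pochhammer_Suc algebra_simps)
  finally show ?case .
qed

lemma pochhammer_add_one:
  fixes b :: "'a::field"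
  assumes "b \<noteq> 0"
  shows "pochhammer (b + 1) k = pochhammer b k * (b + of_nat k) / b"
  using assms by (metis pochhammer_rec pochhammer_Suc nonzero_eq_divide_eq mult.commute)

lemma sum_alternating_binomial_pochhammer:
  fixes a b :: "'a::linordered_field"
  assumes "b > 0"
  shows "(\<Sum>k\<le>m. (-1)^k * of_nat (m choose k) * (pochhammer a k / pochhammer b k))
         = pochhammer (b - a) m / pochhammer b m"
  using assms
proof (induction m arbitrary: b)
  case 0
  then show ?case by simp
next
  case (Suc m)
  have step: "pochhammer a k / pochhammer b k - pochhammer a (Suc k) / pochhammer b (Suc k)
      = (b - a) / b * (pochhammer a k / pochhammer (b + 1) k)" for k
  proof -
    have "pochhammer b k \<noteq> 0" "b + of_nat k \<noteq> 0"
      using Suc.prems by (simp_all add: pochhammer_pos add_pos_nonneg less_imp_neq[symmetric])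
    then show ?thesis
      unfolding pochhammer_add_one[OF less_imp_neq[OF Suc.prems, symmetric]]
      using Suc.prems by (simp add: pochhammer_Suc divide_simps) (simp add: algebra_simps)
  qed
  have "(\<Sum>k\<le>Suc m. (-1)^k * of_nat (Suc m choose k) * (pochhammer a k / pochhammer b k))
      = (\<Sum>k\<le>m. (-1)^k * of_nat (m choose k) * ((b - a) / b * (pochhammer a k / pochhammer (b + 1) k)))"
    by (simp only: alternating_binomial_sum_Suc step)
  also have "\<dots> = (b - a) / b * (\<Sum>k\<le>m. (-1)^k * of_nat (m choose k) * (pochhammer a k / pochhammer (b + 1) k))"
    by (simp add: sum_distrib_left algebra_simps)
  also have "\<dots> = pochhammer (b - a) (Suc m) / pochhammer b (Suc m)"
    using Suc.IH[of "b + 1"] Suc.prems by (simp add: pochhammer_rec algebra_simps)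
  finally show ?case .
qed

lemma sum_alternating_binomial_pochhammer_deriv:
  fixes a b :: "'a::linordered_field"
  assumes "b > 0"
  shows "(\<Sum>k\<le>m. (-1)^k * of_nat (m choose k) * (pochhammer_deriv a k / pochhammer b k))
         = - pochhammer_deriv (b - a) m / pochhammer b m"
  using assms
proof (induction m arbitrary: b)
  case 0
  then show ?case by simp
next
  case (Suc m)
  have step: "pochhammer_deriv a k / pochhammer b k - pochhammer_deriv a (Suc k) / pochhammer b (Suc k)
      = (b - a) / b * (pochhammer_deriv a k / pochhammer (b + 1) k)
        - 1 / b * (pochhammer a k / pochhammer (b + 1) k)" for k
  proof -
    have "pochhammer b k \<noteq> 0" "b + of_nat k \<noteq> 0"
      using Suc.prems by (simp_all add: pochhammer_pos add_pos_nonneg less_imp_neq[symmetric])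
    then show ?thesis
      unfolding pochhammer_add_one[OF less_imp_neq[OF Suc.prems, symmetric]]
      using Suc.prems by (simp add: pochhammer_Suc divide_simps) (simp add: algebra_simps)
  qed
  have "(\<Sum>k\<le>Suc m. (-1)^k * of_nat (Suc m choose k) * (pochhammer_deriv a k / pochhammer b k))
      = (\<Sum>k\<le>m. (-1)^k * of_nat (m choose k) * ((b - a) / b * (pochhammer_deriv a k / pochhammer (b + 1) k)
           - 1 / b * (pochhammer a k / pochhammer (b + 1) k)))"
    by (simp only: alternating_binomial_sum_Suc step)
  also have "\<dots> = (b - a) / b * (\<Sum>k\<le>m. (-1)^k * of_nat (m choose k) * (pochhammer_deriv a k / pochhammer (b + 1) k))
       - 1 / b * (\<Sum>k\<le>m. (-1)^k * of_nat (m choose k) * (pochhammer a k / pochhammer (b + 1) k))"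
    by (simp add: sum_distrib_left sum_subtractf algebra_simps)
  also have "\<dots> = - ((b - a) * pochhammer_deriv (b - a + 1) m + pochhammer (b - a + 1) m) / (b * pochhammer (b + 1) m)"
    using Suc.IH[of "b + 1"] sum_alternating_binomial_pochhammer[where a = a and b = "b + 1"] Suc.prems
      pochhammer_pos[of "b + 1" m]
    by (simp add: field_simps)
  also have "\<dots> = - pochhammer_deriv (b - a) (Suc m) / pochhammer b (Suc m)"
    by (simp only: pochhammer_deriv_Suc' pochhammer_rec) (simp add: algebra_simps)
  finally show ?case .
qed

lemma harm_0 [simp]: "harm 0 = 0"
  by (simp add: harm_def)

lemma harm_Suc [simp]: "harm (Suc n) = harm n + 1 / of_nat (Suc n)"
  by (simp add: harm_def)

lemma pochhammer_deriv_one: "pochhammer_deriv (1::rat) m = fact m * harm m"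
  by (induction m) (simp_all add: pochhammer_fact[symmetric] field_simps)

lemma pochhammer_deriv_half:
  "pochhammer_deriv (1/2::rat) k = pochhammer (1/2) k * (2 * harm (2 * k) - harm k)"
proof (induction k)
  case 0
  then show ?case by simp
next
  case (Suc k)
  have "harm (2 * Suc k) = harm (2 * k) + 1 / of_nat (2 * k + 1) + 1 / of_nat (2 * k + 2)"
    by simp
  moreover have "2 * (1 / of_nat (2 * k + 2)) = (1::rat) / of_nat (Suc k)"
    by (simp add: field_simps)
  ultimately have harm_step:
    "2 * harm (2 * Suc k) - harm (Suc k) = 2 * harm (2 * k) - harm k + 2 / of_nat (2 * k + 1)"
    by (simp only: harm_Suc) (simp add: algebra_simps)
  define E where "E = 2 * harm (2 * k) - harm k"
  have "pochhammer_deriv (1/2) (Suc k) = pochhammer (1/2) k * ((1/2 + of_nat k) * E + 1)"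
    by (simp only: pochhammer_deriv.simps Suc.IH E_def) (simp add: algebra_simps)
  also have "(1/2 + of_nat k) * E + 1 = (1/2 + of_nat k) * (E + 2 / of_nat (2 * k + 1))"
    by (simp add: field_simps)
  also have "pochhammer (1/2) k * ((1/2 + of_nat k) * (E + 2 / of_nat (2 * k + 1)))
      = pochhammer (1/2) (Suc k) * (2 * harm (2 * Suc k) - harm (Suc k))"
    by (simp only: pochhammer_Suc harm_step E_def mult.assoc)
  finally show ?case .
qed

lemma pochhammer_three_halves: "pochhammer (3/2::rat) k = of_nat (2 * k + 1) * pochhammer (1/2) k"
  using pochhammer_rec[of "1/2::rat" k] pochhammer_Suc[of "1/2::rat" k] by (simp add: field_simps)

lemma pochhammer_half: "pochhammer (1/2::rat) m = fact (2 * m) / (4 ^ m * fact m)"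
  by (simp add: fact_double power_mult)

lemma pochhammer_div_fact:
  "pochhammer (a::'a::field_char_0) m / fact m = (\<Prod>i\<in>{1..m}. (a + of_nat i - 1) / of_nat i)"
  by (simp add: pochhammer_prod fact_prod prod_dividef prod.atLeast1_atMost_eq
      atLeast0LessThan[symmetric] prod.shift_bounds_cl_Suc_ivl algebra_simps)

lemma prod_one_minus_inverse:
  "(\<Prod>i\<in>{1..m}. 1 - of_nat (2 * m + 1) * (1 / of_nat i)) = (-1) ^ m * (of_nat (2 * m choose m) :: rat)"
proof -
  have "(\<Prod>i\<in>{1..m}. 1 - of_nat (2 * m + 1) * (1 / of_nat i))
      = (\<Prod>i\<in>{1..m}. (- of_nat (2 * m) + of_nat i - 1) / (of_nat i :: rat))"
    by (rule prod.cong) (auto simp: field_simps)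
  also have "\<dots> = pochhammer (- of_nat (2 * m)) m / fact m"
    by (simp add: pochhammer_div_fact)
  also have "\<dots> = (-1) ^ m * (pochhammer (of_nat m + 1) m / fact m)"
    by (simp add: pochhammer_minus)
  also have "pochhammer (of_nat m + 1) m / fact m = (of_nat (2 * m choose m) :: rat)"
    using pochhammer_product'[of "1::rat" m m]
    by (simp add: pochhammer_fact[symmetric] binomial_fact mult_2 add.commute)
  finally show ?thesis .
qed

lemma prod_one_minus_half_inverse:
  "(\<Prod>i\<in>{1..m}. 1 - of_nat (2 * m + 1) * (1 / of_nat (2 * i)))
    = (-1) ^ m * (of_nat (2 * m choose m) :: rat) / 4 ^ m"
proof -
  have "(\<Prod>i\<in>{1..m}. 1 - of_nat (2 * m + 1) * (1 / of_nat (2 * i)))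
      = (\<Prod>i\<in>{1..m}. ((1/2 - of_nat m) + of_nat i - 1) / (of_nat i :: rat))"
    by (rule prod.cong) (auto simp: field_simps)
  also have "\<dots> = pochhammer (1/2 - of_nat m) m / fact m"
    by (simp add: pochhammer_div_fact)
  also have "\<dots> = (-1) ^ m * (pochhammer (1/2) m / fact m)"
    using pochhammer_minus[of "of_nat m - 1/2 :: rat" m] by simp
  also have "pochhammer (1/2) m / fact m = (of_nat (2 * m choose m) :: rat) / 4 ^ m"
    by (simp add: pochhammer_half binomial_fact)
  finally show ?thesis
    by simp
qed

theorem sum_alternating_binomial_harm:
  "(\<Sum>k\<le>m. (-1)^k * of_nat (m choose k) * (2 * harm (2 * k) - harm k) / of_nat (2 * k + 1))
    = - (4 ^ m * harm m / of_nat (2 * m choose m)) / of_nat (2 * m + 1)"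
proof -
  have "pochhammer (1/2::rat) k \<noteq> 0" for k
    using pochhammer_pos[of "1/2::rat" k] by simp
  then have "(\<Sum>k\<le>m. (-1)^k * of_nat (m choose k) * (2 * harm (2 * k) - harm k) / of_nat (2 * k + 1))
      = (\<Sum>k\<le>m. (-1)^k * of_nat (m choose k) * (pochhammer_deriv (1/2) k / pochhammer (3/2) k))"
    by (simp add: pochhammer_deriv_half pochhammer_three_halves)
  also have "\<dots> = - pochhammer_deriv (3/2 - 1/2) m / pochhammer (3/2::rat) m"
    by (rule sum_alternating_binomial_pochhammer_deriv) simp
  also have "\<dots> = - (4 ^ m * harm m / of_nat (2 * m choose m)) / of_nat (2 * m + 1)"
    by (simp add: pochhammer_deriv_one pochhammer_three_halves pochhammer_half binomial_fact mult_ac)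
  finally show ?thesis .
qed

lemma sum_alternating_binomial_harm_truncated:
  assumes "m \<ge> 1"
  shows "(\<Sum>k\<in>{1..m - 1}. (-1)^k * of_nat (m choose k) * (2 * harm (2 * k) - harm k) / of_nat (2 * k + 1))
    = ((-1) ^ m * (harm m - 2 * harm (2 * m)) - 4 ^ m * harm m / of_nat (2 * m choose m))
      / of_nat (2 * m + 1)"
    (is "?T = (_ - ?X) / _")
proof -
  define T X where "T = ?T" and "X = ?X"
  have "{..m} = insert 0 (insert m {1..m - 1})"
    using assms by auto
  then have "(\<Sum>k\<le>m. (-1)^k * of_nat (m choose k) * (2 * harm (2 * k) - harm k) / of_nat (2 * k + 1))
      = (-1) ^ m * (2 * harm (2 * m) - harm m) / of_nat (2 * m + 1) + T"
    using assms by (simp add: T_def)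
  then have "- X / of_nat (2 * m + 1) = (-1) ^ m * (2 * harm (2 * m) - harm m) / of_nat (2 * m + 1) + T"
    unfolding sum_alternating_binomial_harm X_def by simp
  then have "T = - X / of_nat (2 * m + 1) - (-1) ^ m * (2 * harm (2 * m) - harm m) / of_nat (2 * m + 1)"
    by (simp add: algebra_simps)
  also have "\<dots> = ((-1) ^ m * (harm m - 2 * harm (2 * m)) - X) / of_nat (2 * m + 1)"
    by (simp add: diff_divide_distrib add_divide_distrib algebra_simps)
  finally have "T = ((-1) ^ m * (harm m - 2 * harm (2 * m)) - X) / of_nat (2 * m + 1)" .
  then show ?thesis
    by (simp add: T_def X_def)
qed

section \<open>Congruences of \<open>p\<close>-integral rationals\<close>

definition p_integral :: "nat \<Rightarrow> rat \<Rightarrow> bool" where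
  "p_integral p x \<longleftrightarrow> (\<exists>a b :: int. \<not> int p dvd b \<and> x = of_int a / of_int b)"

lemma rat_cong_iff: "rat_cong x y p \<longleftrightarrow> (\<exists>t. p_integral p t \<and> x - y = of_nat p * t)"
  unfolding rat_cong_def p_integral_def by (metis dvd_0_right)

lemma p_integral_inverse_of_nat:
  assumes "0 < n" "n < p"
  shows "p_integral p (1 / of_nat n)"
proof -
  have "\<not> int p dvd int n"
    using assms by (auto dest: zdvd_imp_le)
  then show ?thesis
    unfolding p_integral_def by (metis of_int_1 of_int_of_nat_eq)
qed

context
  fixes p :: nat
  assumes prime: "prime p"
begin

lemma p_integral_of_int [simp]: "p_integral p (of_int a)"
proof -
  have "\<not> int p dvd 1"
    using prime by (metis not_prime_unit prime_nat_int_transfer)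
  then show ?thesis
    unfolding p_integral_def by (metis div_by_1 of_int_1)
qed

lemma p_integral_of_nat [simp]: "p_integral p (of_nat n)"
  using p_integral_of_int[of "int n"] by simp

lemma p_integral_numeral [simp]: "p_integral p (numeral n)"
  using p_integral_of_nat[of "numeral n"] by simp

lemma p_integral_0 [simp]: "p_integral p 0" and p_integral_1 [simp]: "p_integral p 1"
  using p_integral_of_nat[of 0] p_integral_of_nat[of 1] by simp_all

lemma p_integral_minus_one_power [simp]: "p_integral p ((-1) ^ n)"
  using p_integral_of_int[of "(-1) ^ n"] by simp

lemma prime_not_dvd_mult: "\<not> int p dvd b \<Longrightarrow> \<not> int p dvd d \<Longrightarrow> \<not> int p dvd (b * d)"
  using prime by (simp add: prime_dvd_mult_iff prime_nat_int_transfer)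

lemma p_integral_add [intro]: "p_integral p x \<Longrightarrow> p_integral p y \<Longrightarrow> p_integral p (x + y)"
  unfolding p_integral_def
proof (elim exE conjE)
  fix a b c d :: int
  assume "\<not> int p dvd b" "\<not> int p dvd d" "x = of_int a / of_int b" "y = of_int c / of_int d"
  moreover from this have "b \<noteq> 0" "d \<noteq> 0" by auto
  ultimately show "\<exists>a b. \<not> int p dvd b \<and> x + y = of_int a / of_int b"
    by (intro exI[of _ "a * d + c * b"] exI[of _ "b * d"]) (simp add: prime_not_dvd_mult field_simps)
qed

lemma p_integral_mult [intro]: "p_integral p x \<Longrightarrow> p_integral p y \<Longrightarrow> p_integral p (x * y)"
  unfolding p_integral_def
proof (elim exE conjE)
  fix a b c d :: int
  assume "\<not> int p dvd b" "\<not> int p dvd d" "x = of_int a / of_int b" "y = of_int c / of_int d"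
  then show "\<exists>a b. \<not> int p dvd b \<and> x * y = of_int a / of_int b"
    by (intro exI[of _ "a * c"] exI[of _ "b * d"]) (simp add: prime_not_dvd_mult)
qed

lemma p_integral_uminus [intro]: "p_integral p x \<Longrightarrow> p_integral p (- x)"
  unfolding p_integral_def by (metis minus_divide_left of_int_minus)

lemma p_integral_power [intro]: "p_integral p x \<Longrightarrow> p_integral p (x ^ n)"
  by (induction n) auto

lemma p_integral_sum [intro]: "(\<And>i. i \<in> A \<Longrightarrow> p_integral p (f i)) \<Longrightarrow> p_integral p (sum f A)"
  by (induction A rule: infinite_finite_induct) auto

lemma rat_cong_refl [simp]: "rat_cong x x p"
  unfolding rat_cong_iff by (metis mult_zero_right p_integral_0 right_minus_eq)

lemma rat_cong_sym: "rat_cong x y p \<Longrightarrow> rat_cong y x p"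
  unfolding rat_cong_iff by (metis minus_diff_eq mult_minus_right p_integral_uminus)

lemma rat_cong_add: "rat_cong x x' p \<Longrightarrow> rat_cong y y' p \<Longrightarrow> rat_cong (x + y) (x' + y') p"
  unfolding rat_cong_iff by (metis add_diff_add distrib_left p_integral_add)

lemma rat_cong_trans [trans]: "rat_cong x y p \<Longrightarrow> rat_cong y z p \<Longrightarrow> rat_cong x z p"
  using rat_cong_add[of x y y z] by (simp add: rat_cong_iff)

lemma rat_cong_uminus: "rat_cong x x' p \<Longrightarrow> rat_cong (- x) (- x') p"
  unfolding rat_cong_iff by (metis minus_diff_eq minus_diff_minus mult_minus_right p_integral_uminus)

lemma rat_cong_diff: "rat_cong x x' p \<Longrightarrow> rat_cong y y' p \<Longrightarrow> rat_cong (x - y) (x' - y') p"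
  using rat_cong_add[of x x' "- y" "- y'"] rat_cong_uminus[of y y'] by simp

lemma p_integral_rat_cong: "rat_cong x y p \<Longrightarrow> p_integral p y \<Longrightarrow> p_integral p x"
  unfolding rat_cong_iff by (metis diff_eq_eq p_integral_add p_integral_mult p_integral_of_nat)

lemma rat_cong_mult:
  assumes "rat_cong x x' p" "rat_cong y y' p" "p_integral p x'" "p_integral p y'"
  shows "rat_cong (x * y) (x' * y') p"
proof -
  obtain s t where "p_integral p s" "x - x' = of_nat p * s" "p_integral p t" "y - y' = of_nat p * t"
    using assms(1,2) unfolding rat_cong_iff by blast
  moreover have "p_integral p x"
    using assms(1,3) by (rule p_integral_rat_cong)
  ultimately have "p_integral p (x * t + s * y')"
    using assms(4) by blast
  moreover have "x * y - x' * y' = of_nat p * (x * t + s * y')"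
    using \<open>x - x' = _\<close> \<open>y - y' = _\<close> by (simp add: algebra_simps eq_diff_eq)
  ultimately show ?thesis
    unfolding rat_cong_iff by blast
qed

lemma rat_cong_sum:
  "(\<And>i. i \<in> A \<Longrightarrow> rat_cong (f i) (g i) p) \<Longrightarrow> rat_cong (sum f A) (sum g A) p"
  by (induction A rule: infinite_finite_induct) (auto intro: rat_cong_add)

lemma rat_cong_0_iff: "rat_cong x 0 p \<longleftrightarrow> p_integral p (x / of_nat p)"
  using prime unfolding rat_cong_iff by (auto simp: field_simps prime_gt_0_nat)

lemma rat_cong_1_invertible:
  assumes "rat_cong x 1 p"
  shows "x \<noteq> 0" and "p_integral p (1 / x)"
proof -
  obtain a b :: int where ab: "\<not> int p dvd b" "x - 1 = of_nat p * (of_int a / of_int b)"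
    using assms unfolding rat_cong_iff p_integral_def by blast
  then have c: "\<not> int p dvd (b + int p * a)"
    by (simp add: dvd_add_left_iff)
  moreover have "b \<noteq> 0"
    using ab(1) by auto
  then have x: "x = of_int (b + int p * a) / of_int b"
    using ab(2) by (simp add: field_simps eq_diff_eq)
  ultimately show "p_integral p (1 / x)"
    unfolding p_integral_def by (intro exI[of _ b] exI[of _ "b + int p * a"]) simp
  show "x \<noteq> 0"
    unfolding x using ab(1) c by (metis divide_eq_0_iff dvd_0_right of_int_eq_0_iff)
qed

lemma rat_cong_inverse:
  assumes "rat_cong x 1 p"
  shows "rat_cong (1 / x) 1 p"
proof -
  obtain t where t: "p_integral p t" "x - 1 = of_nat p * t"
    using assms unfolding rat_cong_iff by blast
  have "1 / x - 1 = - (x - 1) * (1 / x)"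
    using rat_cong_1_invertible(1)[OF assms] by (simp add: field_simps)
  also have "\<dots> = of_nat p * (- t * (1 / x))"
    unfolding t(2) by simp
  finally have "1 / x - 1 = of_nat p * (- t * (1 / x))" .
  moreover have "p_integral p (- t * (1 / x))"
    using t(1) rat_cong_1_invertible(2)[OF assms] by blast
  ultimately show ?thesis
    unfolding rat_cong_iff by blast
qed

lemma rat_cong_multiple: "p_integral p t \<Longrightarrow> rat_cong (of_nat p * t) 0 p"
  unfolding rat_cong_iff by auto

lemma rat_cong_prod_one_minus:
  assumes "finite A" "\<And>i. i \<in> A \<Longrightarrow> p_integral p (x i)"
  shows "rat_cong ((1 - (\<Prod>i\<in>A. 1 - of_nat p * x i)) / of_nat p) (\<Sum>i\<in>A. x i) p"
  using assms
proof (induction A rule: finite_induct)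
  case empty
  then show ?case by simp
next
  case (insert y F)
  define e where "e = (1 - (\<Prod>i\<in>F. 1 - of_nat p * x i)) / of_nat p"
  have "p \<noteq> 0"
    using prime by auto
  then have "(1 - (\<Prod>i\<in>insert y F. 1 - of_nat p * x i)) / of_nat p = x y + e - of_nat p * (x y * e)"
    using insert.hyps by (simp add: e_def field_simps)
  moreover have e: "rat_cong e (\<Sum>i\<in>F. x i) p"
    using insert by (simp add: e_def)
  moreover have "rat_cong (of_nat p * (x y * e)) 0 p"
    using p_integral_rat_cong[OF e] insert.prems by (intro rat_cong_multiple) auto
  ultimately have "rat_cong ((1 - (\<Prod>i\<in>insert y F. 1 - of_nat p * x i)) / of_nat p) (x y + (\<Sum>i\<in>F. x i) - 0) p"
    by (simp only: rat_cong_add rat_cong_diff rat_cong_refl)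
  then show ?case
    using insert.hyps by simp
qed

lemma rat_cong_inverse_int:
  assumes "[a = b] (mod int p)" "\<not> int p dvd a"
  shows "rat_cong (1 / of_int a) (1 / of_int b) p"
proof -
  obtain k where k: "b - a = int p * k"
    using assms(1) by (metis cong_iff_dvd_diff cong_sym dvdE)
  have "\<not> int p dvd b"
    using assms by (metis cong_dvd_iff)
  then have "\<not> int p dvd (a * b)" "a \<noteq> 0" "b \<noteq> 0"
    using assms(2) by (auto simp: prime_not_dvd_mult)
  then have "1 / of_int a - 1 / of_int b = of_nat p * (of_int k / of_int (a * b) :: rat)"
    using arg_cong[OF k, of "of_int :: int \<Rightarrow> rat"] by (simp add: field_simps)
  moreover have "p_integral p (of_int k / of_int (a * b))"
    unfolding p_integral_def using \<open>\<not> int p dvd (a * b)\<close> by blast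
  ultimately show ?thesis
    unfolding rat_cong_iff by blast
qed

section \<open>Harmonic numbers, central binomial coefficients and the Fermat quotient\<close>

text \<open>Doubling permutes the nonzero residues, so the sum \<open>S\<close> satisfies \<open>S \<equiv> S/4\<close>.\<close>

lemma sum_inverse_squares_cong:
  assumes "p > 3"
  shows "rat_cong (\<Sum>i\<in>{1..<p}. 1 / of_nat i ^ 2) 0 p"
proof -
  define S where "S = (\<Sum>i\<in>{1..<int p}. 1 / of_int i ^ 2 :: rat)"
  have "odd p"
    using prime assms prime_odd_nat by auto
  then have bij: "bij_betw (\<lambda>i. 2 * i mod int p) {1..<int p} {1..<int p}"
    by (intro bij_betw_int_remainders_mult) simp
  have "S = (\<Sum>i\<in>{1..<int p}. 1 / of_int ((2 * i mod int p) ^ 2))"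
    unfolding S_def of_int_power by (rule sum.reindex_bij_betw[OF bij, symmetric])
  also have "rat_cong \<dots> (\<Sum>i\<in>{1..<int p}. 1 / of_int ((2 * i) ^ 2)) p"
  proof (rule rat_cong_sum, rule rat_cong_inverse_int)
    fix i assume "i \<in> {1..<int p}"
    then have "2 * i mod int p \<in> {1..<int p}"
      using bij by (auto simp: bij_betw_def)
    then have "\<not> int p dvd (2 * i mod int p)"
      by (auto simp: zdvd_not_zless)
    then show "\<not> int p dvd (2 * i mod int p) ^ 2"
      using prime by (metis prime_dvd_power_int prime_nat_int_transfer)
    show "[(2 * i mod int p) ^ 2 = (2 * i) ^ 2] (mod int p)"
      by (intro cong_pow) (simp add: cong_def)
  qed
  also have "(\<Sum>i\<in>{1..<int p}. 1 / of_int ((2 * i) ^ 2)) = S / 4"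
    by (simp add: S_def sum_divide_distrib power_mult_distrib mult.commute)
  finally have "rat_cong (S - S / 4) (S / 4 - S / 4) p"
    by (intro rat_cong_diff) simp_all
  then have "rat_cong (S - S / 4) 0 p"
    by simp
  moreover have "p_integral p (4 * (1 / of_nat 3))"
    using assms by (intro p_integral_mult p_integral_inverse_of_nat) auto
  ultimately have "rat_cong (4 * (1 / of_nat 3) * (S - S / 4)) (4 * (1 / of_nat 3) * 0) p"
    by (meson rat_cong_mult rat_cong_refl p_integral_0)
  moreover have "{1..<int p} = int ` {1..<p}"
    by (simp add: image_int_atLeastLessThan)
  then have "S = (\<Sum>i\<in>{1..<p}. 1 / of_nat i ^ 2)"
    by (simp add: S_def sum.reindex)
  ultimately show ?thesis
    by simp
qed

text \<open>Wolstenholme's theorem \<open>H\<^sub>p\<^sub>-\<^sub>1 \<equiv> 0 (mod p\<^sup>2)\<close>, from \<open>1/i + 1/(p-i) = p/(i(p-i)) \<equiv> -p/i\<^sup>2\<close>.\<close>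

lemma harm_prime_minus_one_cong:
  assumes "p > 3"
  shows "rat_cong (harm (p - 1) / of_nat p) 0 p"
proof -
  have "2 * harm (p - 1) = (\<Sum>i\<in>{1..<p}. 1 / of_nat i + 1 / of_nat (p - i))"
  proof -
    have "{1..p - 1} = {1..<p}"
      using assms by auto
    then have "harm (p - 1) = (\<Sum>i\<in>{1..<p}. 1 / of_nat i)"
      by (simp add: harm_def)
    moreover have "(\<Sum>i\<in>{1..<p}. 1 / of_nat i) = (\<Sum>i\<in>{1..<p}. 1 / (of_nat (p - i) :: rat))"
      by (subst sum.atLeastLessThan_rev) simp
    ultimately show ?thesis
      by (simp add: sum.distrib)
  qed
  also have "\<dots> = of_nat p * (\<Sum>i\<in>{1..<p}. 1 / (of_nat i * of_nat (p - i)))"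
    unfolding sum_distrib_left by (rule sum.cong) (auto simp: of_nat_diff field_simps)
  finally have "2 * harm (p - 1) / of_nat p = (\<Sum>i\<in>{1..<p}. 1 / (of_nat i * of_nat (p - i)))"
    using assms by simp
  also have "rat_cong \<dots> (\<Sum>i\<in>{1..<p}. - (1 / of_nat i ^ 2)) p"
  proof (rule rat_cong_sum)
    fix i assume i: "i \<in> {1..<p}"
    then have "p_integral p ((1 / of_nat i) ^ 2 * (1 / of_nat (p - i)))"
      by (intro p_integral_mult p_integral_power p_integral_inverse_of_nat) auto
    moreover have "1 / (of_nat i * of_nat (p - i)) - - (1 / of_nat i ^ 2)
        = of_nat p * ((1 / of_nat i) ^ 2 * (1 / of_nat (p - i) :: rat))"
    proof -
      have diff: "of_nat (p - i) = of_nat p - (of_nat i :: rat)"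
        using i by (simp add: of_nat_diff)
      have "of_nat p - (of_nat i :: rat) \<noteq> 0" "(of_nat i :: rat) \<noteq> 0"
        using i by auto
      then show ?thesis
        unfolding diff by (simp add: field_simps power2_eq_square)
    qed
    ultimately show "rat_cong (1 / (of_nat i * of_nat (p - i))) (- (1 / of_nat i ^ 2)) p"
      unfolding rat_cong_iff by blast
  qed
  also have "rat_cong (\<Sum>i\<in>{1..<p}. - (1 / of_nat i ^ 2)) (- 0) p"
    unfolding sum_negf by (intro rat_cong_uminus sum_inverse_squares_cong assms)
  finally have "rat_cong (1 / of_nat 2 * (2 * harm (p - 1) / of_nat p)) (1 / of_nat 2 * 0) p"
    using p_integral_inverse_of_nat[of 2 p] assms by (intro rat_cong_mult) auto
  then show ?thesis
    by simp
qed

lemma central_binomial_cong: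
  assumes "p = 2 * m + 1"
  shows "rat_cong ((1 - (-1) ^ m * of_nat (2 * m choose m)) / of_nat p) (harm m) p"
proof -
  have "rat_cong ((1 - (\<Prod>i\<in>{1..m}. 1 - of_nat p * (1 / of_nat i))) / of_nat p)
      (\<Sum>i\<in>{1..m}. 1 / of_nat i) p"
    using assms by (intro rat_cong_prod_one_minus p_integral_inverse_of_nat) auto
  then show ?thesis
    by (simp only: assms prod_one_minus_inverse harm_def)
qed

lemma central_binomial_div_four_pow_cong:
  assumes "p = 2 * m + 1"
  shows "rat_cong ((1 - (-1) ^ m * of_nat (2 * m choose m) / 4 ^ m) / of_nat p) (harm m / 2) p"
proof -
  have "rat_cong ((1 - (\<Prod>i\<in>{1..m}. 1 - of_nat p * (1 / of_nat (2 * i)))) / of_nat p)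
      (\<Sum>i\<in>{1..m}. 1 / of_nat (2 * i)) p"
    using assms by (intro rat_cong_prod_one_minus p_integral_inverse_of_nat) auto
  moreover have "(\<Sum>i\<in>{1..m}. 1 / of_nat (2 * i)) = harm m / (2::rat)"
    by (simp add: harm_def sum_divide_distrib mult.commute)
  ultimately show ?thesis
    by (simp only: assms prod_one_minus_half_inverse)
qed

lemma p_integral_harm: "m < p \<Longrightarrow> p_integral p (harm m)"
  unfolding harm_def by (intro p_integral_sum p_integral_inverse_of_nat) auto

lemma rat_cong_power: "rat_cong x y p \<Longrightarrow> p_integral p y \<Longrightarrow> rat_cong (x ^ n) (y ^ n) p"
  by (induction n) (auto intro: rat_cong_mult)

lemma rat_cong_1_of_cong_div:
  assumes "rat_cong ((1 - x) / of_nat p) y p" "p_integral p y"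
  shows "rat_cong x 1 p"
proof -
  have "rat_cong (1 - x) 0 p"
    unfolding rat_cong_0_iff using assms by (rule p_integral_rat_cong)
  then have "rat_cong (1 - (1 - x)) (1 - 0) p"
    by (intro rat_cong_diff rat_cong_refl)
  then show ?thesis
    by simp
qed

lemma fermat_quotient2_cong_harm:
  assumes "p = 2 * m + 1"
  shows "rat_cong (fermat_quotient2 p) (- harm m / 2) p"
proof -
  define c where "c = (-1) ^ m * (of_nat (2 * m choose m) :: rat)"
  define Q where "Q = c / 4 ^ m"
  have "m \<ge> 1"
    using prime assms by (cases m) auto
  have u: "p_integral p (harm m)" "p_integral p (harm m / 2)"
    using assms p_integral_harm[of m] p_integral_inverse_of_nat[of 2 p] \<open>m \<ge> 1\<close>
      p_integral_mult[of "harm m" "1/2"] by auto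
  have c: "rat_cong ((1 - c) / of_nat p) (harm m) p"
    unfolding c_def using assms by (rule central_binomial_cong)
  have Q: "rat_cong ((1 - Q) / of_nat p) (harm m / 2) p"
    unfolding Q_def c_def using assms by (rule central_binomial_div_four_pow_cong)
  have Q1: "rat_cong Q 1 p"
    using Q u(2) by (rule rat_cong_1_of_cong_div)
  have "Q \<noteq> 0" "p \<noteq> 0"
    using rat_cong_1_invertible(1)[OF Q1] assms by simp_all
  have "fermat_quotient2 p = (4 ^ m - 1) / of_nat p"
    unfolding fermat_quotient2_def assms by (simp add: power_mult)
  also have "4 ^ m = c / Q"
    using \<open>Q \<noteq> 0\<close> by (simp add: Q_def)
  also have "(c / Q - 1) / of_nat p = ((1 - Q) / of_nat p - (1 - c) / of_nat p) * (1 / Q)"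
    using \<open>Q \<noteq> 0\<close> \<open>p \<noteq> 0\<close> by (simp add: field_simps)
  also have "rat_cong \<dots> ((harm m / 2 - harm m) * 1) p"
    using u by (intro rat_cong_mult rat_cong_diff rat_cong_inverse Q c Q1) auto
  finally show ?thesis
    by simp
qed

lemma fermat_quotient2_square_cong:
  assumes "p = 2 * m + 1"
  shows "rat_cong (fermat_quotient2 p ^ 2) (harm m ^ 2 / 4) p"
proof -
  have "m \<ge> 1"
    using prime assms by (cases m) auto
  then have "p_integral p (- (harm m * (1 / of_nat 2)))"
    using assms by (intro p_integral_uminus p_integral_mult p_integral_harm p_integral_inverse_of_nat) auto
  then have "rat_cong (fermat_quotient2 p ^ 2) ((- harm m / 2) ^ 2) p"
    using fermat_quotient2_cong_harm[OF assms] by (intro rat_cong_power) simp_all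
  then show ?thesis
    by (simp add: power_divide)
qed

lemma sum_alternating_binomial_harm_truncated_cong:
  assumes p: "p = 2 * m + 1" and "p > 3"
  shows "rat_cong
    (\<Sum>k\<in>{1..m - 1}. (-1) ^ k * of_nat (m choose k) * (2 * harm (2 * k) - harm k) / of_nat (2 * k + 1))
    (- 2 * (-1) ^ m * (fermat_quotient2 p) ^ 2) p"
proof -
  define u H Q where "u = harm m" and "H = harm (2 * m)"
    and "Q = (-1) ^ m * of_nat (2 * m choose m) / (4 ^ m :: rat)"
  have "m \<ge> 1"
    using assms by simp
  have "p_integral p u"
    unfolding u_def using p by (intro p_integral_harm) simp
  moreover from this have "p_integral p (u * (1 / of_nat 2))"
    using assms by (intro p_integral_mult p_integral_inverse_of_nat) simp_all
  ultimately have u: "p_integral p u" "p_integral p (u / 2)"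
    by simp_all
  have "p_integral p (- u * (u / 2))"
    by (rule p_integral_mult[OF p_integral_uminus[OF u(1)] u(2)])
  have "p_integral p (- 2 * (-1) ^ m)"
    by (intro p_integral_mult p_integral_uminus) simp_all
  moreover have "p_integral p (u ^ 2 / 4)"
    using p_integral_power[OF u(2), of 2] by (simp add: power_divide)
  ultimately have q: "rat_cong (- 2 * (-1) ^ m * (u ^ 2 / 4)) (- 2 * (-1) ^ m * fermat_quotient2 p ^ 2) p"
    using fermat_quotient2_square_cong[OF p] unfolding u_def
    by (intro rat_cong_sym[OF rat_cong_mult[OF rat_cong_refl]]) simp_all
  have Q: "rat_cong ((1 - Q) / of_nat p) (u / 2) p"
    unfolding Q_def u_def using p by (rule central_binomial_div_four_pow_cong)
  have Q1: "rat_cong Q 1 p"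
    using Q u(2) by (intro rat_cong_1_of_cong_div) simp_all
  have H: "rat_cong (H / of_nat p) 0 p"
    using harm_prime_minus_one_cong assms by (simp add: H_def)
  have "Q \<noteq> 0" "(of_nat p :: rat) \<noteq> 0" "(-1 :: rat) ^ m \<noteq> 0" "(of_nat (2 * m choose m) :: rat) \<noteq> 0"
    using rat_cong_1_invertible(1)[OF Q1] p by simp_all
  then have X: "4 ^ m * u / of_nat (2 * m choose m) = (-1) ^ m * (u / Q)"
    by (simp add: Q_def field_simps)
  have "(\<Sum>k\<in>{1..m - 1}. (-1) ^ k * of_nat (m choose k) * (2 * harm (2 * k) - harm k) / of_nat (2 * k + 1))
      = ((-1) ^ m * (u - 2 * H) - 4 ^ m * u / of_nat (2 * m choose m)) / of_nat (2 * m + 1)"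
    unfolding u_def H_def by (rule sum_alternating_binomial_harm_truncated[OF \<open>m \<ge> 1\<close>])
  also have "\<dots> = (-1) ^ m * (- u * ((1 - Q) / of_nat p) * (1 / Q) - 2 * (H / of_nat p))"
    unfolding X p[symmetric] using \<open>Q \<noteq> 0\<close> \<open>of_nat p \<noteq> 0\<close> by (simp add: field_simps)
  also have "rat_cong \<dots> ((-1) ^ m * (- u * (u / 2) * 1 - 2 * 0)) p"
    using u \<open>p_integral p (- u * (u / 2))\<close>
    by (intro rat_cong_mult rat_cong_diff rat_cong_refl rat_cong_inverse Q Q1 H) auto
  also have "(-1) ^ m * (- u * (u / 2) * 1 - 2 * 0) = - 2 * (-1) ^ m * (u ^ 2 / 4)"
    by (simp add: power2_eq_square)
  finally show ?thesis
    using q by (rule rat_cong_trans)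
qed

end

theorem mainTheorem7:
  fixes p :: nat
  assumes "prime p" and "p > 3"
  shows "rat_cong
    (\<Sum>k\<in>{1..(p - 3) div 2}.
        (-1) ^ k * of_nat ((p - 1) div 2 choose k) * (2 * harm (2 * k) - harm k)
          / of_nat (2 * k + 1))
    (- 2 * (-1) ^ ((p - 1) div 2) * (fermat_quotient2 p) ^ 2) p"
proof -
  define m where "m = (p - 1) div 2"
  have "odd p"
    using assms prime_odd_nat by auto
  then have p: "p = 2 * m + 1" and "(p - 3) div 2 = m - 1"
    using assms(2) by (auto simp: m_def elim!: oddE)
  show ?thesis
    unfolding \<open>(p - 3) div 2 = m - 1\<close> m_def[symmetric]
    by (rule sum_alternating_binomial_harm_truncated_cong[OF assms(1) p assms(2)])
qed

end
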